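(* Let $G$ be a bus graph containing an $(I,O)$-chain (as defined below). Then in any realization $\Gamma$ of $G$, $\Gamma(I)$ and $\Gamma(O)$ are parallel.
   Context: A bus graph is a finite bipartite graph $G=(\mathcal{B},\mathcal{C};\mathcal{E})$ with $\deg(c)\le 4$ for all $c\in\mathcal{C}$. A realization $\Gamma$ of $G$ in the integer grid is a drawing such that: (1) each $B\in\mathcal{B}$ is drawn as a closed line segment $\Gamma(B)$ along a grid line (a "bus"); (2) each $c\in\mathcal{C}$ is drawn as a grid point $\Gamma(c)$; (3) each edge $(B,c)\in\mathcal{E}$ is drawn as a closed line segment along a grid line between a point of $\Gamma(B)$ and $\Gamma(c)$, perpendicular to $\Gamma(B)$, containing no connectors or buses other than $\Gamma(B)$ and $\Gamma(c)$ (edges may cross other edges); (4) no two buses or connectors intersect. An $(A,B)$-perp consists of three distinct $\mathcal{C}$-vertices $x,y,z$, five distinct $\mathcal{B}$-vertices $A,A',B,B',C$, and the twelve edges $(A,x),(A',x),(B,x),(B',x)$, $(A,y),(A',y),(B,y),(C,y)$, $(A,z),(A',z),(B',z),(C,z)$ (for different names substitute accordingly, e.g. an $(I_3,O)$-perp has $I_3$ in the role of $A$ and $O$ in the role of $B$). A $(B,o)$-flipper consists of an $(A,B)$-perp (for some fresh $A$) together with an additional $\mathcal{C}$-vertex $o$ and additional edges $(B,o),(B',o)$. An $(I,O)$-chain consists of vertex-disjoint copies of an $(I,o_1)$-flipper, an $(I_1,o_2)$-flipper, an $(I_2,o_3)$-flipper and an $(I_3,O)$-perp, together with the three additional edges $(I_1,o_1),(I_2,o_2),(I_3,o_3)$.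 *)

theory Defs imports Main begin

definition bus_graph :: "'b set \<Rightarrow> 'c set \<Rightarrow> ('b \<times> 'c) set \<Rightarrow> bool" where
  "bus_graph Bs Cs E \<longleftrightarrow> finite Bs \<and> finite Cs \<and> E \<subseteq> Bs \<times> Cs \<and>
     (\<forall>c\<in>Cs. card {B. (B, c) \<in> E} \<le> 4)"

datatype orient = Hor | Ver

(* A bus drawing: (orientation, fixed coordinate, lo, hi).
   Hor k lo hi = {(x,k) | lo \<le> x \<le> hi};  Ver k lo hi = {(k,y) | lo \<le> y \<le> hi}. *)
type_synonym seg = "orient \<times> int \<times> int \<times> int"

fun seg_orient :: "seg \<Rightarrow> orient" where
  "seg_orient (d, k, lo, hi) = d"

fun seg_ok :: "seg \<Rightarrow> bool" where
  "seg_ok (d, k, lo, hi) = (lo < hi)"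

fun seg_pts :: "seg \<Rightarrow> (int \<times> int) set" where
  "seg_pts (Hor, k, lo, hi) = {(x, y). y = k \<and> lo \<le> x \<and> x \<le> hi}"
| "seg_pts (Ver, k, lo, hi) = {(x, y). x = k \<and> lo \<le> y \<and> y \<le> hi}"

(* grid points of the closed axis-parallel segment between p and q
   (used only when p and q lie on a common grid line) *)
definition gseg :: "int \<times> int \<Rightarrow> int \<times> int \<Rightarrow> (int \<times> int) set" where
  "gseg p q = {(x, y). min (fst p) (fst q) \<le> x \<and> x \<le> max (fst p) (fst q) \<and>
                        min (snd p) (snd q) \<le> y \<and> y \<le> max (snd p) (snd q)}"

definition perp_to :: "seg \<Rightarrow> int \<times> int \<Rightarrow> int \<times> int \<Rightarrow> bool" where
  "perp_to s p q \<longleftrightarrow> (if seg_orient s = Hor then fst p = fst q else snd p = snd q)"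

definition realization ::
  "'b set \<Rightarrow> 'c set \<Rightarrow> ('b \<times> 'c) set \<Rightarrow> ('b \<Rightarrow> seg) \<Rightarrow> ('c \<Rightarrow> int \<times> int) \<Rightarrow> bool" where
  "realization Bs Cs E \<Gamma>b \<Gamma>c \<longleftrightarrow>
     (\<forall>B\<in>Bs. seg_ok (\<Gamma>b B)) \<and>
     (\<forall>(B, c)\<in>E. \<exists>p\<in>seg_pts (\<Gamma>b B). perp_to (\<Gamma>b B) p (\<Gamma>c c) \<and>
         (\<forall>B'\<in>Bs. B' \<noteq> B \<longrightarrow> gseg p (\<Gamma>c c) \<inter> seg_pts (\<Gamma>b B') = {}) \<and>
         (\<forall>c'\<in>Cs. c' \<noteq> c \<longrightarrow> \<Gamma>c c' \<notin> gseg p (\<Gamma>c c))) \<and>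
     (\<forall>B\<in>Bs. \<forall>B'\<in>Bs. B \<noteq> B' \<longrightarrow> seg_pts (\<Gamma>b B) \<inter> seg_pts (\<Gamma>b B') = {}) \<and>
     (\<forall>c\<in>Cs. \<forall>c'\<in>Cs. c \<noteq> c' \<longrightarrow> \<Gamma>c c \<noteq> \<Gamma>c c') \<and>
     (\<forall>B\<in>Bs. \<forall>c\<in>Cs. \<Gamma>c c \<notin> seg_pts (\<Gamma>b B))"

definition is_perp :: "('b \<times> 'c) set \<Rightarrow> 'b \<Rightarrow> 'b \<Rightarrow> 'b \<Rightarrow> 'b \<Rightarrow> 'b \<Rightarrow> 'c \<Rightarrow> 'c \<Rightarrow> 'c \<Rightarrow> bool" where
  "is_perp E A A' B B' C x y z \<longleftrightarrow>
     distinct [x, y, z] \<and> distinct [A, A', B, B', C] \<and>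
     {(A,x),(A',x),(B,x),(B',x),(A,y),(A',y),(B,y),(C,y),(A,z),(A',z),(B',z),(C,z)} \<subseteq> E"

definition is_flipper :: "('b \<times> 'c) set \<Rightarrow> 'b \<Rightarrow> 'b \<Rightarrow> 'b \<Rightarrow> 'b \<Rightarrow> 'b \<Rightarrow> 'c \<Rightarrow> 'c \<Rightarrow> 'c \<Rightarrow> 'c \<Rightarrow> bool" where
  "is_flipper E A A' B B' C x y z w \<longleftrightarrow>
     is_perp E A A' B B' C x y z \<and> w \<notin> {x, y, z} \<and> (B, w) \<in> E \<and> (B', w) \<in> E"

definition has_chain :: "('b \<times> 'c) set \<Rightarrow> 'b \<Rightarrow> 'b \<Rightarrow> bool" where
  "has_chain E Ib Ob \<longleftrightarrow>
    (\<exists>A1 A1' B1' C1 x1 y1 z1 o1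
       A2 A2' I1 B2' C2 x2 y2 z2 o2
       A3 A3' I2 B3' C3 x3 y3 z3 o3
       I3 A4' B4' C4 x4 y4 z4.
      is_flipper E A1 A1' Ib B1' C1 x1 y1 z1 o1 \<and>
      is_flipper E A2 A2' I1 B2' C2 x2 y2 z2 o2 \<and>
      is_flipper E A3 A3' I2 B3' C3 x3 y3 z3 o3 \<and>
      is_perp E I3 A4' Ob B4' C4 x4 y4 z4 \<and>
      (let bs = [{A1, A1', Ib, B1', C1}, {A2, A2', I1, B2', C2},
                 {A3, A3', I2, B3', C3}, {I3, A4', Ob, B4', C4}];
           cs = [{x1, y1, z1, o1}, {x2, y2, z2, o2}, {x3, y3, z3, o3}, {x4, y4, z4}]
       in \<forall>i<4. \<forall>j<4. i \<noteq> j \<longrightarrow> bs ! i \<inter> bs ! j = {} \<and> cs ! i \<inter> cs ! j = {}) \<and>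
      (I1, o1) \<in> E \<and> (I2, o2) \<in> E \<and> (I3, o3) \<in> E)"

end

theory Submission imports Defs begin

(* Two parallel buses attached to the same connector c reach it along the grid line through c
   perpendicular to both, and neither edge may cross the other bus, so c lies strictly between
   the two buses. Hence no three buses attached to one connector are parallel. This constraint
   alone forces, in an (A,B)-perp, A to be perpendicular to B and B parallel to B' (otherwise one
   of x, y, z sees three parallel buses). So in a (B,o)-flipper every further bus attached to o
   is perpendicular to B, and along an (I,O)-chain the orientation switches four times: from I
   to I1, I2, I3 and finally O. *)

fun seg_coord :: "seg \<Rightarrow> int" where
  "seg_coord (d, k, lo, hi) = k"

fun normal_coord :: "orient \<Rightarrow> int \<times> int \<Rightarrow> int" where
  "normal_coord Hor p = snd p"
| "normal_coord Ver p = fst p"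

abbreviation strictly_between :: "int \<Rightarrow> int \<Rightarrow> int \<Rightarrow> bool" where
  "strictly_between a x b \<equiv> a < x \<and> x < b \<or> b < x \<and> x < a"

lemma parallel_attachments_opposite:
  assumes "seg_orient s1 = d" "seg_orient s2 = d"
    and "p1 \<in> seg_pts s1" "perp_to s1 p1 q" "gseg p1 q \<inter> seg_pts s2 = {}" "q \<notin> seg_pts s1"
    and "p2 \<in> seg_pts s2" "perp_to s2 p2 q" "gseg p2 q \<inter> seg_pts s1 = {}" "q \<notin> seg_pts s2"
  shows "strictly_between (seg_coord s1) (normal_coord d q) (seg_coord s2)"
proof -
  have sep: "p1 \<notin> gseg p2 q" "p2 \<notin> gseg p1 q"
    using assms(3,5,7,9) by blast+
  obtain k1 l1 h1 k2 l2 h2 where s: "s1 = (d, k1, l1, h1)" "s2 = (d, k2, l2, h2)"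
    using assms(1,2) by (cases s1; cases s2) auto
  obtain a1 b1 a2 b2 x y where p: "p1 = (a1, b1)" "p2 = (a2, b2)" "q = (x, y)"
    by (cases p1; cases p2; cases q)
  show ?thesis
    using assms(3,4,6-8,10) sep unfolding s p
    by (cases d) (auto simp: gseg_def perp_to_def)
qed

lemma realization_edgeE:
  assumes "realization Bs Cs E \<Gamma>b \<Gamma>c" "(B, c) \<in> E"
  obtains p where "p \<in> seg_pts (\<Gamma>b B)" "perp_to (\<Gamma>b B) p (\<Gamma>c c)"
    "\<And>B'. B' \<in> Bs \<Longrightarrow> B' \<noteq> B \<Longrightarrow> gseg p (\<Gamma>c c) \<inter> seg_pts (\<Gamma>b B') = {}"
  using assms unfolding realization_def by fast

lemma realization_connector_off_buses:
  assumes "realization Bs Cs E \<Gamma>b \<Gamma>c" "B \<in> Bs" "c \<in> Cs"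
  shows "\<Gamma>c c \<notin> seg_pts (\<Gamma>b B)"
  using assms unfolding realization_def by blast

lemma realization_parallel_buses_opposite:
  assumes R: "realization Bs Cs E \<Gamma>b \<Gamma>c" and "E \<subseteq> Bs \<times> Cs"
    and "(B, c) \<in> E" "(B', c) \<in> E" "B \<noteq> B'" "seg_orient (\<Gamma>b B) = seg_orient (\<Gamma>b B')"
  shows "strictly_between (seg_coord (\<Gamma>b B)) (normal_coord (seg_orient (\<Gamma>b B)) (\<Gamma>c c))
           (seg_coord (\<Gamma>b B'))"
proof -
  have "B \<in> Bs" "B' \<in> Bs" "c \<in> Cs"
    using assms(2-4) by auto
  moreover obtain p where "p \<in> seg_pts (\<Gamma>b B)" "perp_to (\<Gamma>b B) p (\<Gamma>c c)"
    "\<And>B''. B'' \<in> Bs \<Longrightarrow> B'' \<noteq> B \<Longrightarrow> gseg p (\<Gamma>c c) \<inter> seg_pts (\<Gamma>b B'') = {}"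
    using realization_edgeE[OF R assms(3)] by blast
  moreover obtain p' where "p' \<in> seg_pts (\<Gamma>b B')" "perp_to (\<Gamma>b B') p' (\<Gamma>c c)"
    "\<And>B''. B'' \<in> Bs \<Longrightarrow> B'' \<noteq> B' \<Longrightarrow> gseg p' (\<Gamma>c c) \<inter> seg_pts (\<Gamma>b B'') = {}"
    using realization_edgeE[OF R assms(4)] by blast
  ultimately show ?thesis
    using parallel_attachments_opposite assms(5,6) realization_connector_off_buses[OF R]
    by (metis (no_types))
qed

definition no_parallel_triple :: "('b \<times> 'c) set \<Rightarrow> ('b \<Rightarrow> orient) \<Rightarrow> bool" where
  "no_parallel_triple E D \<longleftrightarrow>
     (\<forall>B1 B2 B3 c. (B1, c) \<in> E \<and> (B2, c) \<in> E \<and> (B3, c) \<in> E \<and> distinct [B1, B2, B3] \<longrightarrow>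
        \<not> (D B1 = D B2 \<and> D B2 = D B3))"

lemma realization_no_parallel_triple:
  assumes "realization Bs Cs E \<Gamma>b \<Gamma>c" "E \<subseteq> Bs \<times> Cs"
  shows "no_parallel_triple E (seg_orient \<circ> \<Gamma>b)"
  unfolding no_parallel_triple_def comp_def
proof (intro allI impI notI)
  fix B1 B2 B3 c
  assume "(B1, c) \<in> E \<and> (B2, c) \<in> E \<and> (B3, c) \<in> E \<and> distinct [B1, B2, B3]"
    and "seg_orient (\<Gamma>b B1) = seg_orient (\<Gamma>b B2) \<and> seg_orient (\<Gamma>b B2) = seg_orient (\<Gamma>b B3)"
  then show False
    using realization_parallel_buses_opposite[OF assms, of B1 c B2]
      realization_parallel_buses_opposite[OF assms, of B2 c B3]
      realization_parallel_buses_opposite[OF assms, of B1 c B3]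
    by auto
qed

lemma no_parallel_tripleD:
  assumes "no_parallel_triple E D" "(B1, c) \<in> E" "(B2, c) \<in> E" "(B3, c) \<in> E"
    "distinct [B1, B2, B3]" "D B1 = D B2"
  shows "D B3 \<noteq> D B1"
  using assms unfolding no_parallel_triple_def by metis

lemma orient_neq_neq: "(a :: orient) \<noteq> b \<Longrightarrow> b \<noteq> c \<Longrightarrow> a = c"
  by (cases a; cases b; cases c) auto

lemma is_perp_swap: "is_perp E A A' B B' C x y z \<Longrightarrow> is_perp E A A' B' B C x z y"
  unfolding is_perp_def by auto

lemma perp_orient_neq:
  assumes D: "no_parallel_triple E D" and P: "is_perp E A A' B B' C x y z"
  shows "D A \<noteq> D B"
proof
  assume AB: "D A = D B"
  have "D A' \<noteq> D A"
    using no_parallel_tripleD[OF D, of A x B A'] AB P unfolding is_perp_def by auto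
  moreover have "D B' \<noteq> D A"
    using no_parallel_tripleD[OF D, of A x B B'] AB P unfolding is_perp_def by auto
  ultimately have A'B': "D A' = D B'"
    by (metis orient_neq_neq)
  have "D C \<noteq> D A"
    using no_parallel_tripleD[OF D, of A y B C] AB P unfolding is_perp_def by auto
  with \<open>D A' \<noteq> D A\<close> have "D C = D A'"
    by (metis orient_neq_neq)
  then show False
    using no_parallel_tripleD[OF D, of A' z B' C] A'B' P unfolding is_perp_def by auto
qed

lemma perp_orientations:
  assumes "no_parallel_triple E D" "is_perp E A A' B B' C x y z"
  shows "D A \<noteq> D B" "D B = D B'"
  using perp_orient_neq[OF assms] perp_orient_neq[OF assms(1) is_perp_swap[OF assms(2)]] orient_neq_neq
  by metis+

lemma flipper_output_perpendicular:
  assumes D: "no_parallel_triple E D" and F: "is_flipper E A A' B B' C x y z w"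
    and "(J, w) \<in> E" "J \<noteq> B" "J \<noteq> B'"
  shows "D J \<noteq> D B"
proof -
  have P: "is_perp E A A' B B' C x y z" and "(B, w) \<in> E" "(B', w) \<in> E"
    using F unfolding is_flipper_def by auto
  moreover have "B \<noteq> B'"
    using P unfolding is_perp_def by auto
  ultimately show ?thesis
    using no_parallel_tripleD[OF D] perp_orientations(2)[OF D P] assms(3-5) by simp
qed

lemma chain_ends_parallel:
  assumes D: "no_parallel_triple E D" and "has_chain E Ib Ob"
  shows "D Ib = D Ob"
proof -
  obtain A1 A1' B1' C1 x1 y1 z1 o1 A2 A2' I1 B2' C2 x2 y2 z2 o2
      A3 A3' I2 B3' C3 x3 y3 z3 o3 I3 A4' B4' C4 x4 y4 z4 where
    F1: "is_flipper E A1 A1' Ib B1' C1 x1 y1 z1 o1" and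
    F2: "is_flipper E A2 A2' I1 B2' C2 x2 y2 z2 o2" and
    F3: "is_flipper E A3 A3' I2 B3' C3 x3 y3 z3 o3" and
    P4: "is_perp E I3 A4' Ob B4' C4 x4 y4 z4" and
    disj: "let bs = [{A1, A1', Ib, B1', C1}, {A2, A2', I1, B2', C2},
                     {A3, A3', I2, B3', C3}, {I3, A4', Ob, B4', C4}];
               cs = [{x1, y1, z1, o1}, {x2, y2, z2, o2}, {x3, y3, z3, o3}, {x4, y4, z4}]
           in \<forall>i<4. \<forall>j<4. i \<noteq> j \<longrightarrow> bs ! i \<inter> bs ! j = {} \<and> cs ! i \<inter> cs ! j = {}" and
    links: "(I1, o1) \<in> E" "(I2, o2) \<in> E" "(I3, o3) \<in> E"
    using assms(2) unfolding has_chain_def by (elim exE conjE) (rule that, assumption+)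
  have "{A1, A1', Ib, B1', C1} \<inter> {A2, A2', I1, B2', C2} = {}"
    "{A2, A2', I1, B2', C2} \<inter> {A3, A3', I2, B3', C3} = {}"
    "{A3, A3', I2, B3', C3} \<inter> {I3, A4', Ob, B4', C4} = {}"
    using disj[unfolded Let_def, rule_format, of 0 1] disj[unfolded Let_def, rule_format, of 1 2]
      disj[unfolded Let_def, rule_format, of 2 3]
    by simp_all
  then have "D I1 \<noteq> D Ib" "D I2 \<noteq> D I1" "D I3 \<noteq> D I2"
    using flipper_output_perpendicular[OF D F1 links(1)] flipper_output_perpendicular[OF D F2 links(2)]
      flipper_output_perpendicular[OF D F3 links(3)]
    by auto
  moreover have "D I3 \<noteq> D Ob"
    using perp_orientations(1)[OF D P4] .
  ultimately show ?thesis
    by (metis orient_neq_neq)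
qed

theorem lemma6:
  fixes Bs :: "'b set" and Cs :: "'c set" and E :: "('b \<times> 'c) set"
    and \<Gamma>b :: "'b \<Rightarrow> seg" and \<Gamma>c :: "'c \<Rightarrow> int \<times> int" and Ib Ob :: 'b
  assumes "bus_graph Bs Cs E"
    and "has_chain E Ib Ob"
    and "realization Bs Cs E \<Gamma>b \<Gamma>c"
  shows "seg_orient (\<Gamma>b Ib) = seg_orient (\<Gamma>b Ob)"
proof -
  have "E \<subseteq> Bs \<times> Cs"
    using assms(1) unfolding bus_graph_def by simp
  with assms(3) have "no_parallel_triple E (seg_orient \<circ> \<Gamma>b)"
    by (rule realization_no_parallel_triple)
  from chain_ends_parallel[OF this assms(2)] show ?thesis
    by simp
qed

end
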